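(* Consider the linear regression model $\boldsymbol{Y}=\boldsymbol{X}\boldsymbol{\theta}+\boldsymbol{\epsilon}$ with $\boldsymbol{Y}\in\mathbb{R}^n$, $\boldsymbol{X}$ an $n\times p$ design matrix, $\boldsymbol{\theta}\in\mathbb{R}^p$ and $\boldsymbol{\epsilon}\sim N_n(\boldsymbol{0},\sigma^2\boldsymbol{I}_n)$. Let $m^\ast=\{j:\theta_j\neq 0\}$ be the true model and $m_{\mathrm{full}}=\{1,\dots,p\}$. Let $\widehat{m}\subseteq m_{\mathrm{full}}$ be the model selected by a given model selection procedure applied to the sample $D$ of size $n$, and let $\widehat{m}^{(1)},\dots,\widehat{m}^{(B)}$ be the models obtained by applying the same procedure to bootstrap samples $D^{(1)},\dots,D^{(B)}$ generated from $D$. Fix $\alpha\in(0,1)$. Assume: (A.1) (model selection consistency) $P(\widehat{m}\not\supseteq m^\ast)=o(1)$ and $P(\widehat{m}\supsetneqq m^\ast)=o(1)$ as $n\to\infty$; (A.2) (bootstrap validity) for each resampled model, $P(\widehat{m}^{(b)}\neq\widehat{m})=o(1)$. Let $(\widehat{m}_L,\widehat{m}_U)$ be a solution of the program $$(\widehat{m}_L,\widehat{m}_U)=\underset{(m_1,m_2)\in S}{\arg\min}\left\{|m_2|-|m_1| : \widehat{r}(m_1,m_2)\ge 1-\alpha\right\},$$ where $S=\{(m_1^{(i)},m_2^{(i)}):0\le i\le p\}$ and, for each $i$, $(m_1^{(i)},m_2^{(i)})=\arg\max_{m_1,m_2}\{\widehat{r}(m_1,m_2): |m_2|-|m_1|=i,\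 \emptyset\subseteq m_1\subseteq m_2\subseteq m_{\mathrm{full}}\}$. Then $$P(\widehat{m}_L\subseteq m^\ast\subseteq\widehat{m}_U)\ge 1-\alpha+o(1).$$
   Context: Models are identified with index sets of predictors, i.e. subsets of $\{1,\dots,p\}$; $|m|$ denotes the cardinality of $m$. For nested models $m_1\subseteq m_2$, the bootstrap coverage rate is $\widehat{r}(m_1,m_2)=\frac{1}{B}\sum_{b=1}^B I(m_1\subseteq\widehat{m}^{(b)}\subseteq m_2)$, where $I(\cdot)$ is the indicator function. *)

theory Defs
  imports "HOL-Probability.Probability"
begin

definition m_full :: "nat \<Rightarrow> nat set" where
  "m_full p = {1..p}"

definition true_model :: "nat \<Rightarrow> (nat \<Rightarrow> real) \<Rightarrow> nat set" where
  "true_model p \<theta> = {j \<in> {1..p}. \<theta> j \<noteq> 0}"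

text \<open>Bootstrap coverage rate r(m1,m2) = (1/B) sum_{b=1}^B I(m1 <= mb <= m2),
  where mb is the model selected on the b-th bootstrap sample.\<close>
definition coverage_rate :: "nat \<Rightarrow> (nat \<Rightarrow> nat set) \<Rightarrow> nat set \<Rightarrow> nat set \<Rightarrow> real" where
  "coverage_rate B mb m1 m2 =
     (1 / real B) * (\<Sum>b\<in>{1..B}. if m1 \<subseteq> mb b \<and> mb b \<subseteq> m2 then 1 else 0)"

definition nested_pairs :: "nat \<Rightarrow> nat \<Rightarrow> (nat set \<times> nat set) set" where
  "nested_pairs p i = {(m1, m2). m1 \<subseteq> m2 \<and> m2 \<subseteq> m_full p \<and> card m2 - card m1 = i}"

definition is_level_argmax ::
    "nat \<Rightarrow> (nat set \<Rightarrow> nat set \<Rightarrow> real) \<Rightarrow> nat \<Rightarrow> nat set \<times> nat set \<Rightarrow> bool" where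
  "is_level_argmax p r i mm \<longleftrightarrow>
     mm \<in> nested_pairs p i \<and> (\<forall>(a, b) \<in> nested_pairs p i. r a b \<le> r (fst mm) (snd mm))"

text \<open>(mL,mU) is a solution of the two-stage program: for some choice of
  argmaxes (m1^(i),m2^(i)), i = 0..p, forming S, (mL,mU) is in S, satisfies
  r(mL,mU) >= 1 - alpha and minimises |m2| - |m1| among elements of S with
  r >= 1 - alpha.\<close>
definition is_mcs_solution ::
    "nat \<Rightarrow> real \<Rightarrow> (nat set \<Rightarrow> nat set \<Rightarrow> real) \<Rightarrow> nat set \<Rightarrow> nat set \<Rightarrow> bool" where
  "is_mcs_solution p \<alpha> r mL mU \<longleftrightarrow>
     (\<exists>sel :: nat \<Rightarrow> nat set \<times> nat set.
        (\<forall>i\<in>{0..p}. is_level_argmax p r i (sel i)) \<and>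
        (mL, mU) \<in> sel ` {0..p} \<and>
        r mL mU \<ge> 1 - \<alpha> \<and>
        (\<forall>(m1, m2) \<in> sel ` {0..p}. r m1 m2 \<ge> 1 - \<alpha> \<longrightarrow>
             card mU - card mL \<le> card m2 - card m1))"

end

theory Submission
  imports Defs
begin

text \<open>If every bootstrap sample selects the true model, the coverage rate of every pair is 0 or 1,
  so a solution of the program, whose coverage rate is at least \<open>1 - \<alpha> > 0\<close>, brackets the true
  model. Hence the solution can fail to bracket the true model only if the selected model differs
  from the true one or some bootstrap model differs from the selected one; by (A.1), (A.2) and the
  union bound these events have vanishing probability, so the coverage even tends to 1.\<close>

lemma coverage_rate_const:
  assumes "B \<ge> 1" "\<And>b. b \<in> {1..B} \<Longrightarrow> mb b = T"
  shows "coverage_rate B mb m1 m2 = (if m1 \<subseteq> T \<and> T \<subseteq> m2 then 1 else 0)"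
proof -
  have "(\<Sum>b\<in>{1..B}. if m1 \<subseteq> mb b \<and> mb b \<subseteq> m2 then 1 else 0 :: real)
      = (\<Sum>b\<in>{1..B}. if m1 \<subseteq> T \<and> T \<subseteq> m2 then 1 else 0)"
    using assms(2) by (intro sum.cong) auto
  then show ?thesis
    using assms(1) by (simp add: coverage_rate_def)
qed

lemma mcs_solution_brackets_common_model:
  assumes "B \<ge> 1" "\<alpha> < 1" "\<And>b. b \<in> {1..B} \<Longrightarrow> mb b = T"
    and "is_mcs_solution p \<alpha> (coverage_rate B mb) mL mU"
  shows "mL \<subseteq> T \<and> T \<subseteq> mU"
proof -
  have "coverage_rate B mb mL mU \<ge> 1 - \<alpha>"
    using assms(4) unfolding is_mcs_solution_def by blast
  then show ?thesis
    using assms(2) coverage_rate_const[OF assms(1,3)] by (auto split: if_splits)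
qed

lemma sets_Collect_count_space:
  assumes "f \<in> measurable M (count_space UNIV)"
  shows "{x \<in> space M. P (f x)} \<in> sets M"
proof -
  have "{x \<in> space M. P (f x)} = f -` {y. P y} \<inter> space M"
    by auto
  then show ?thesis
    using measurable_sets[OF assms, of "{y. P y}"] by simp
qed

lemma sets_Collect_neq_count_space:
  assumes f: "f \<in> measurable M (count_space UNIV)" and g: "g \<in> measurable M (count_space UNIV)"
    and "f ` space M \<subseteq> F" "finite F"
  shows "{x \<in> space M. g x \<noteq> f x} \<in> sets M"
proof -
  have "{x \<in> space M. g x \<noteq> f x}
      = (\<Union>S\<in>F. {x \<in> space M. f x = S} \<inter> {x \<in> space M. g x \<noteq> S})"
    using assms(3) by auto
  then show ?thesis
    using sets_Collect_count_space[OF f] sets_Collect_count_space[OF g] \<open>finite F\<close>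
    by (auto intro!: sets.finite_UN)
qed

lemma (in prob_space) prob_ge_1_minus_union_bound:
  assumes "G \<in> events" "E \<in> events" "finite I" "\<And>i. i \<in> I \<Longrightarrow> A i \<in> events"
    and "space M - G \<subseteq> E \<union> (\<Union>i\<in>I. A i)"
  shows "1 - (prob E + (\<Sum>i\<in>I. prob (A i))) \<le> prob G"
proof -
  have "1 - prob G = prob (space M - G)"
    using prob_compl[OF assms(1)] by simp
  also have "\<dots> \<le> prob (E \<union> (\<Union>i\<in>I. A i))"
    using assms by (intro finite_measure_mono) auto
  also have "\<dots> \<le> prob E + prob (\<Union>i\<in>I. A i)"
    using assms by (intro measure_Un_le) auto
  also have "\<dots> \<le> prob E + (\<Sum>i\<in>I. prob (A i))"
    using measure_UNION_le[OF assms(3,4)] by simp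
  finally show ?thesis
    by simp
qed

lemma (in prob_space) prob_mcs_brackets_true_model:
  fixes mhat mL mU :: "'a \<Rightarrow> nat set" and mboot :: "nat \<Rightarrow> 'a \<Rightarrow> nat set"
  assumes "B \<ge> 1" "\<alpha> < 1"
    and mhat_range: "\<And>\<omega>. \<omega> \<in> space M \<Longrightarrow> mhat \<omega> \<subseteq> m_full p"
    and mhat_meas: "mhat \<in> measurable M (count_space UNIV)"
    and mboot_meas: "\<And>b. b \<in> {1..B} \<Longrightarrow> mboot b \<in> measurable M (count_space UNIV)"
    and mL_meas: "mL \<in> measurable M (count_space UNIV)"
    and mU_meas: "mU \<in> measurable M (count_space UNIV)"
    and solution: "\<And>\<omega>. \<omega> \<in> space M \<Longrightarrow>
               is_mcs_solution p \<alpha> (coverage_rate B (\<lambda>b. mboot b \<omega>)) (mL \<omega>) (mU \<omega>)"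
  shows "1 - (prob {\<omega> \<in> space M. \<not> T \<subseteq> mhat \<omega>} + prob {\<omega> \<in> space M. T \<subset> mhat \<omega>}
              + (\<Sum>b\<in>{1..B}. prob {\<omega> \<in> space M. mboot b \<omega> \<noteq> mhat \<omega>}))
         \<le> prob {\<omega> \<in> space M. mL \<omega> \<subseteq> T \<and> T \<subseteq> mU \<omega>}"
    (is "1 - (prob ?under + prob ?over + (\<Sum>b\<in>{1..B}. prob (?differ b))) \<le> prob ?G")
proof -
  have under: "?under \<in> events" and over: "?over \<in> events"
    using sets_Collect_count_space[OF mhat_meas] by auto
  have differ: "?differ b \<in> events" if "b \<in> {1..B}" for b
    using mhat_range by (intro sets_Collect_neq_count_space[OF mhat_meas mboot_meas[OF that],
        of "Pow (m_full p)"]) (auto simp: m_full_def)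
  have "?G = {\<omega> \<in> space M. mL \<omega> \<subseteq> T} \<inter> {\<omega> \<in> space M. T \<subseteq> mU \<omega>}"
    by auto
  then have G: "?G \<in> events"
    using sets_Collect_count_space[OF mL_meas] sets_Collect_count_space[OF mU_meas] by auto
  have cover: "space M - ?G \<subseteq> (?under \<union> ?over) \<union> (\<Union>b\<in>{1..B}. ?differ b)"
  proof
    fix \<omega> assume \<omega>: "\<omega> \<in> space M - ?G"
    show "\<omega> \<in> (?under \<union> ?over) \<union> (\<Union>b\<in>{1..B}. ?differ b)"
    proof (rule ccontr)
      assume "\<omega> \<notin> (?under \<union> ?over) \<union> (\<Union>b\<in>{1..B}. ?differ b)"
      then have "\<And>b. b \<in> {1..B} \<Longrightarrow> mboot b \<omega> = T"
        using \<omega> by auto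
      then have "mL \<omega> \<subseteq> T \<and> T \<subseteq> mU \<omega>"
        using \<omega> solution[of \<omega>] assms(1,2) by (intro mcs_solution_brackets_common_model) auto
      then show False
        using \<omega> by auto
    qed
  qed
  have "1 - (prob (?under \<union> ?over) + (\<Sum>b\<in>{1..B}. prob (?differ b))) \<le> prob ?G"
    using G under over differ cover by (intro prob_ge_1_minus_union_bound) auto
  moreover have "prob (?under \<union> ?over) \<le> prob ?under + prob ?over"
    using under over by (rule measure_Un_le)
  ultimately show ?thesis
    by linarith
qed

theorem theorem1:
  fixes M :: "nat \<Rightarrow> 'a measure"
    and p B :: nat
    and \<theta> :: "nat \<Rightarrow> real"
    and \<alpha> :: real
    and mhat :: "nat \<Rightarrow> 'a \<Rightarrow> nat set"
    and mboot :: "nat \<Rightarrow> nat \<Rightarrow> 'a \<Rightarrow> nat set"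
    and mL mU :: "nat \<Rightarrow> 'a \<Rightarrow> nat set"
  assumes prob: "\<And>n. prob_space (M n)"
    and alpha: "0 < \<alpha>" "\<alpha> < 1"
    and B_pos: "B \<ge> 1"
    and mhat_range: "\<And>n \<omega>. \<omega> \<in> space (M n) \<Longrightarrow> mhat n \<omega> \<subseteq> m_full p"
    and mboot_range: "\<And>n b \<omega>. b \<in> {1..B} \<Longrightarrow> \<omega> \<in> space (M n) \<Longrightarrow> mboot n b \<omega> \<subseteq> m_full p"
    and mhat_meas: "\<And>n. mhat n \<in> measurable (M n) (count_space UNIV)"
    and mboot_meas: "\<And>n b. b \<in> {1..B} \<Longrightarrow> mboot n b \<in> measurable (M n) (count_space UNIV)"
    and mL_meas: "\<And>n. mL n \<in> measurable (M n) (count_space UNIV)"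
    and mU_meas: "\<And>n. mU n \<in> measurable (M n) (count_space UNIV)"
    and A1_under: "(\<lambda>n. measure (M n) {\<omega> \<in> space (M n). \<not> true_model p \<theta> \<subseteq> mhat n \<omega>})
                     \<longlonglongrightarrow> 0"
    and A1_over: "(\<lambda>n. measure (M n) {\<omega> \<in> space (M n). true_model p \<theta> \<subset> mhat n \<omega>})
                     \<longlonglongrightarrow> 0"
    and A2: "\<And>b. b \<in> {1..B} \<Longrightarrow>
               (\<lambda>n. measure (M n) {\<omega> \<in> space (M n). mboot n b \<omega> \<noteq> mhat n \<omega>}) \<longlonglongrightarrow> 0"
    and solution: "\<And>n \<omega>. \<omega> \<in> space (M n) \<Longrightarrow>
               is_mcs_solution p \<alpha> (coverage_rate B (\<lambda>b. mboot n b \<omega>)) (mL n \<omega>) (mU n \<omega>)"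
  shows "\<exists>e :: nat \<Rightarrow> real. e \<longlonglongrightarrow> 0 \<and>
           (\<forall>n. measure (M n) {\<omega> \<in> space (M n). mL n \<omega> \<subseteq> true_model p \<theta> \<and>
                                              true_model p \<theta> \<subseteq> mU n \<omega>}
                  \<ge> 1 - \<alpha> + e n)"
proof -
  let ?T = "true_model p \<theta>"
  define s where "s n = measure (M n) {\<omega> \<in> space (M n). \<not> ?T \<subseteq> mhat n \<omega>}
    + measure (M n) {\<omega> \<in> space (M n). ?T \<subset> mhat n \<omega>}
    + (\<Sum>b\<in>{1..B}. measure (M n) {\<omega> \<in> space (M n). mboot n b \<omega> \<noteq> mhat n \<omega>})" for n
  have "s \<longlonglongrightarrow> 0"
    unfolding s_def using A1_under A1_over A2 by (intro tendsto_add_zero tendsto_null_sum) auto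
  then have "(\<lambda>n. - s n) \<longlonglongrightarrow> 0"
    using tendsto_minus by fastforce
  moreover have "1 - s n \<le> measure (M n) {\<omega> \<in> space (M n). mL n \<omega> \<subseteq> ?T \<and> ?T \<subseteq> mU n \<omega>}" for n
    unfolding s_def using B_pos alpha(2) mhat_range mhat_meas mboot_meas mL_meas mU_meas solution
    by (intro prob_space.prob_mcs_brackets_true_model[OF prob]) auto
  ultimately show ?thesis
    using alpha(1) by (intro exI[of _ "\<lambda>n. - s n"]) (smt (verit))
qed

end
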